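(* Let $G(z)=\sum_{n\ge0}a_n^2z^n$ be a transcendental entire function with $a_n\ge0$, and fix $\gamma\in(0,\tfrac12)$. Then there is a set $\mathcal{N}=\mathcal{N}_G\subset\mathbb{R}^+$ such that $\mathbb{R}^+\setminus\mathcal{N}$ has finite logarithmic measure and $H(t)=G(e^t)$ is local $\delta$-admissible on $\{t:e^t\in\mathcal{N}\}$ with \[ \delta(t)=\frac{B(t)}{K^3(e^t)}. \]
   Context: $A=H'/H$, $B=A'$. The maximal term is $\mu(r)=\max_n a_n^2r^n$, the central index is $N(r)=\max\{n:a_n^2r^n=\mu(r)\}$, and $K(r)=N(r)^{(1+\gamma)/2}$. A set $E\subset\mathbb{R}^+$ has finite logarithmic measure if $\int_E dt/t<\infty$. $H$ is local $\delta$-admissible on $T$ if for every $\varepsilon>0$ there exist $\eta>0$ and $t_0(\varepsilon)$ such that for all $t\in T$ with $t>t_0(\varepsilon)$ and all complex $\tau$ with $|\tau|\le\eta\delta(t)$, $\log\frac{H(t+\tau)}{H(t)}=\tau A(t)+\frac12\tau^2B(t)+h_t(\tau)$ with $|h_t(\tau)|\le\varepsilon|\tau|^2B(t)$ (logarithm: the branch analytic in $\tau$ vanishing at $\tau=0$). *)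

theory Defs
  imports "HOL-Analysis.Analysis"
begin

definition G_fun :: "(nat \<Rightarrow> real) \<Rightarrow> complex \<Rightarrow> complex" where
  "G_fun a z = (\<Sum>n. complex_of_real ((a n)\<^sup>2) * z ^ n)"

definition H_fun :: "(nat \<Rightarrow> real) \<Rightarrow> complex \<Rightarrow> complex" where
  "H_fun a w = G_fun a (exp w)"

definition A_fun :: "(nat \<Rightarrow> real) \<Rightarrow> complex \<Rightarrow> complex" where
  "A_fun a w = deriv (H_fun a) w / H_fun a w"

definition B_fun :: "(nat \<Rightarrow> real) \<Rightarrow> complex \<Rightarrow> complex" where
  "B_fun a w = deriv (A_fun a) w"

definition max_term :: "(nat \<Rightarrow> real) \<Rightarrow> real \<Rightarrow> real" where
  "max_term a r = (SUP n. (a n)\<^sup>2 * r ^ n)"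

definition central_index :: "(nat \<Rightarrow> real) \<Rightarrow> real \<Rightarrow> nat" where
  "central_index a r = Max {n. (a n)\<^sup>2 * r ^ n = max_term a r}"

definition K_fun :: "(nat \<Rightarrow> real) \<Rightarrow> real \<Rightarrow> real \<Rightarrow> real" where
  "K_fun a \<gamma> r = real (central_index a r) powr ((1 + \<gamma>) / 2)"

definition finite_log_measure :: "real set \<Rightarrow> bool" where
  "finite_log_measure E \<longleftrightarrow> (\<integral>\<^sup>+ t. ennreal (indicator E t / t) \<partial>lborel) < \<infinity>"

text \<open>The logarithm
  log(H(t+tau)/H(t)) is represented by a branch L, continuous on the closed disk,
  analytic in its interior, with L 0 = 0 and exp (L tau) = H(t+tau)/H(t).\<close>
definition local_delta_admissible ::
  "(complex \<Rightarrow> complex) \<Rightarrow> (complex \<Rightarrow> complex) \<Rightarrow> (complex \<Rightarrow> complex)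
     \<Rightarrow> (real \<Rightarrow> real) \<Rightarrow> real set \<Rightarrow> bool" where
  "local_delta_admissible H A B \<delta> T \<longleftrightarrow>
    (\<forall>\<epsilon>>0. \<exists>\<eta>>0. \<exists>t0. \<forall>t\<in>T. t > t0 \<longrightarrow>
       (\<exists>L. continuous_on (cball 0 (\<eta> * \<delta> t)) L \<and>
            L holomorphic_on ball 0 (\<eta> * \<delta> t) \<and> L 0 = 0 \<and>
            (\<forall>\<tau>. norm \<tau> \<le> \<eta> * \<delta> t \<longrightarrow>
               exp (L \<tau>) = H (of_real t + \<tau>) / H (of_real t) \<and>
               norm (L \<tau> - (\<tau> * A (of_real t) + \<tau>\<^sup>2 * B (of_real t) / 2))
                 \<le> \<epsilon> * (norm \<tau>)\<^sup>2 * Re (B (of_real t)))))"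

end

theory Submission
  imports Defs "HOL-Real_Asymp.Real_Asymp"
begin

text \<open>
  For real s the weights a_n^2 e^(ns), normalised by H(s), form a probability distribution on the
  naturals with mean A(s) and variance B(s), and log H is convex with derivative A.  Its exponential
  moments are controlled by the convexity gaps g(s, v) = log H(s + v) - log H(s) - v A(s): if
  g(s, 1/K) and g(s, -1/K) are at most 2, then B(s) = O(K^2), the third absolute moment is O(K^3),
  and expanding e^(tau (n - A)) termwise gives H(s + tau) / (H(s) e^(tau A)) = 1 + tau^2 B / 2 +
  O(|tau|^3 K^3); taking logarithms yields the admissibility estimate for |tau| <= eta B / K^3.

  The gaps are at most v (A(s + v) - A(s - v)), so with beta = (1 + theta) / 2 they are harmless for
  1/K <= u = A(s)^(-beta) unless A increases by at least 2 A^beta across [s - u, s + u].  On such an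
  exceptional window the potential A^(-theta) drops by at least theta u / 4, so the greedy disjoint
  windows have summable radii and, doubled, they cover the exceptional set: its image under exp has
  finite logarithmic measure.  Off the exceptional set, comparing log H with the maximal term gives
  N(e^s) >= A(s) / 8 for large s, hence K = N^((1 + gamma)/2) >= A^beta when gamma = 2 theta.
\<close>

section \<open>Power series and elementary estimates\<close>

lemma sums_of_nat_mult_power_series:
  fixes d :: "nat \<Rightarrow> 'a::{real_normed_field,banach}"
  assumes "\<And>y. summable (\<lambda>n. d n * y ^ n)"
  shows "(\<lambda>n. of_nat n * d n * x ^ n) sums (x * (\<Sum>n. diffs d n * x ^ n))"
proof -
  have "(\<lambda>n. of_nat n * d n * x ^ (n - Suc 0)) sums (\<Sum>n. diffs d n * x ^ n)"
    by (rule diffs_equiv[OF termdiff_converges_all[OF assms]])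
  from sums_mult[OF this, of x] show ?thesis
    by (rule sums_cong[THEN iffD1, rotated]) (auto simp: algebra_simps power_eq_if)
qed

lemma summable_of_nat_mult_power_series:
  fixes d :: "nat \<Rightarrow> 'a::{real_normed_field,banach}"
  assumes "\<And>y. summable (\<lambda>n. d n * y ^ n)"
  shows "summable (\<lambda>n. (of_nat n * d n) * x ^ n)"
  using sums_of_nat_mult_power_series[OF assms] by (auto simp: sums_iff)

lemma summable_of_nat_power_mult_power_series:
  fixes d :: "nat \<Rightarrow> 'a::{real_normed_field,banach}"
  assumes "\<And>y. summable (\<lambda>n. d n * y ^ n)"
  shows "summable (\<lambda>n. of_nat n ^ k * d n * x ^ n)"
proof (induction k arbitrary: x)
  case 0
  then show ?case using assms by simp
next
  case (Suc k)
  have "summable (\<lambda>n. (of_nat n * (of_nat n ^ k * d n)) * x ^ n)"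
    by (rule summable_of_nat_mult_power_series) (use Suc in auto)
  then show ?case by (simp add: algebra_simps)
qed

lemma has_field_derivative_power_series_exp:
  fixes d :: "nat \<Rightarrow> 'a::{real_normed_field,banach}"
  assumes "\<And>y. summable (\<lambda>n. d n * y ^ n)"
  shows "((\<lambda>w. \<Sum>n. d n * exp w ^ n) has_field_derivative (\<Sum>n. of_nat n * d n * exp w ^ n)) (at w)"
proof -
  have "((\<lambda>x. \<Sum>n. d n * x ^ n) has_field_derivative (\<Sum>n. diffs d n * exp w ^ n)) (at (exp w))"
    by (rule termdiffs_strong_converges_everywhere[OF assms])
  from DERIV_chain2[OF this DERIV_exp] show ?thesis
    using sums_of_nat_mult_power_series[OF assms, of "exp w"] by (simp add: sums_iff mult.commute)
qed


lemma power_div_fact_le_exp: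
  assumes "0 \<le> x"
  shows "x ^ n / fact n \<le> exp (x::real)"
proof -
  have "(\<Sum>k\<in>{n}. x ^ k /\<^sub>R fact k) \<le> exp x"
    using assms by (intro sums_le[OF _ sums_If_finite_set exp_converges]) auto
  then show ?thesis by (simp add: divide_inverse mult.commute)
qed

lemma exp_abs_le_exp_plus_exp_minus: "exp \<bar>y\<bar> \<le> exp y + exp (- y::real)"
  by (cases "y \<ge> 0") (auto simp: add_increasing add_increasing2)

lemma square_le_exp_plus_exp_minus:
  assumes "v > 0"
  shows "(x::real)\<^sup>2 \<le> 2 / v\<^sup>2 * (exp (v * x) + exp (- (v * x)))"
proof -
  have "(v * \<bar>x\<bar>) ^ 2 / fact 2 \<le> exp (v * \<bar>x\<bar>)"
    by (rule power_div_fact_le_exp) (use assms in simp)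
  also have "exp (v * \<bar>x\<bar>) = exp \<bar>v * x\<bar>" using assms by (simp add: abs_mult)
  also have "\<dots> \<le> exp (v * x) + exp (- (v * x))" by (rule exp_abs_le_exp_plus_exp_minus)
  finally have "v\<^sup>2 * x\<^sup>2 \<le> 2 * (exp (v * x) + exp (- (v * x)))"
    by (simp add: power_mult_distrib fact_numeral)
  then show ?thesis using assms by (simp add: field_simps)
qed

lemma abs_cube_mult_exp_le_exp_plus_exp_minus:
  assumes "v > 0" "0 \<le> r" "r \<le> v / 2"
  shows "\<bar>x::real\<bar> ^ 3 * exp (r * \<bar>x\<bar>) \<le> 48 / v ^ 3 * (exp (v * x) + exp (- (v * x)))"
proof -
  have "(v * \<bar>x\<bar> / 2) ^ 3 / fact 3 \<le> exp (v * \<bar>x\<bar> / 2)"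
    by (rule power_div_fact_le_exp) (use assms in simp)
  then have cube: "\<bar>x\<bar> ^ 3 \<le> 48 / v ^ 3 * exp (v * \<bar>x\<bar> / 2)"
    using assms by (simp add: field_simps power_mult_distrib fact_numeral)
  have "exp (r * \<bar>x\<bar>) \<le> exp (v * \<bar>x\<bar> / 2)"
    using mult_right_mono[OF assms(3) abs_ge_zero[of x]] by simp
  with cube have "\<bar>x\<bar> ^ 3 * exp (r * \<bar>x\<bar>) \<le> 48 / v ^ 3 * exp (v * \<bar>x\<bar> / 2) * exp (v * \<bar>x\<bar> / 2)"
    using assms by (intro mult_mono) auto
  also have "\<dots> = 48 / v ^ 3 * exp \<bar>v * x\<bar>" using assms by (simp add: mult_exp_exp abs_mult)
  also have "\<dots> \<le> 48 / v ^ 3 * (exp (v * x) + exp (- (v * x)))"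
    using assms by (intro mult_left_mono exp_abs_le_exp_plus_exp_minus) auto
  finally show ?thesis .
qed

lemma norm_exp_minus_quadratic_le:
  fixes z :: complex
  shows "norm (exp z - 1 - z - z\<^sup>2 / 2) \<le> exp (norm z) * norm z ^ 3 / 2"
proof -
  have "norm (exp z - (\<Sum>i\<le>2. z ^ i / fact i)) \<le> exp (norm z) * norm z ^ Suc 2 / fact 2"
    by (rule Taylor_exp_field)
  moreover have "(\<Sum>i\<le>2. z ^ i / fact i) = 1 + z + z\<^sup>2 / 2"
    by (simp add: numeral_2_eq_2 fact_numeral)
  ultimately show ?thesis by (simp add: numeral_3_eq_3 fact_numeral algebra_simps)
qed

lemma norm_Ln_minus_linear_le:
  fixes w :: complex
  assumes "norm (w - 1) \<le> S" "S \<le> 1 / 2"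
  shows "norm (ln w - (w - 1)) \<le> 2 * S\<^sup>2"
proof -
  have "norm (ln w - (w - 1)) \<le> norm (w - 1) ^ 2 / (1 - norm (w - 1))"
    using Ln_approx_linear[of "w - 1"] assms by simp
  also have "\<dots> \<le> S\<^sup>2 / (1 / 2)"
    using assms by (intro frac_le power_mono) auto
  finally show ?thesis by simp
qed

lemma exp_minus_le_one_minus_half:
  assumes "0 < y" "y \<le> 1"
  shows "exp (- y) \<le> 1 - (y::real) / 2"
proof -
  have "exp (- y) \<le> 1 / (1 + y)"
    using exp_ge_add_one_self[of y] assms by (simp add: exp_minus divide_simps)
  also have "\<dots> \<le> 1 - y / 2"
    using assms by (simp add: field_simps power2_eq_square mult_left_le_one_le)
  finally show ?thesis .
qed

lemma ln_one_plus_ge_half: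
  assumes "0 \<le> x" "x \<le> 1"
  shows "x / 2 \<le> ln (1 + x::real)"
proof -
  have "ln (1 / (1 + x)) \<le> 1 / (1 + x) - 1" using assms by (intro ln_le_minus_one) auto
  then have "x / (1 + x) \<le> ln (1 + x)" using assms by (simp add: ln_div field_simps)
  moreover have "x / 2 \<le> x / (1 + x)" using assms by (intro divide_left_mono) auto
  ultimately show ?thesis by linarith
qed

lemma exp_minus_one_le_twice:
  assumes "0 \<le> x" "x \<le> 1"
  shows "exp x - 1 \<le> 2 * (x::real)"
proof -
  have "exp x \<le> 1 + x + x\<^sup>2" by (rule exp_bound[OF assms])
  moreover have "x\<^sup>2 \<le> x" using assms by (simp add: power2_eq_square mult_left_le_one_le)
  ultimately show ?thesis by simp
qed

lemma powr_neg_decrement_ge: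
  fixes A b x \<theta> :: real
  assumes "0 < \<theta>" "\<theta> < 1" "0 < A" "0 < x" "x \<le> 1" "A * (1 + x) \<le> b"
  shows "\<theta> / 4 * x * A powr (- \<theta>) \<le> A powr (- \<theta>) - b powr (- \<theta>)"
proof -
  have "(1 + x) powr (- \<theta>) = exp (- (\<theta> * ln (1 + x)))"
    using assms by (simp add: powr_def)
  also have "\<dots> \<le> exp (- (\<theta> * x / 2))"
    using ln_one_plus_ge_half[of x] assms by (simp add: mult_left_mono)
  also have "\<dots> \<le> 1 - \<theta> * x / 4"
    using exp_minus_le_one_minus_half[of "\<theta> * x / 2"] assms mult_mono[of \<theta> 1 x 1] by simp
  finally have decay: "(1 + x) powr (- \<theta>) \<le> 1 - \<theta> * x / 4" .
  have "b powr (- \<theta>) \<le> (A * (1 + x)) powr (- \<theta>)"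
    by (rule powr_mono2') (use assms in auto)
  also have "\<dots> = A powr (- \<theta>) * (1 + x) powr (- \<theta>)" using assms by (simp add: powr_mult)
  also have "\<dots> \<le> A powr (- \<theta>) * (1 - \<theta> * x / 4)" by (intro mult_left_mono decay) auto
  finally show ?thesis by (simp add: algebra_simps)
qed

lemma powr_neg_increment_ge:
  fixes A c x \<theta> :: real
  assumes "0 \<le> \<theta>" "0 < A" "0 < c" "c \<le> A * (1 - x)" "0 \<le> x"
  shows "\<theta> * x * A powr (- \<theta>) \<le> c powr (- \<theta>) - A powr (- \<theta>)"
proof -
  have x1: "x < 1"
    using assms by (smt (verit) mult_nonneg_nonpos)
  have "1 + \<theta> * x \<le> 1 + \<theta> * (- ln (1 - x))"
    using ln_le_minus_one[of "1 - x"] x1 assms by (intro add_left_mono mult_left_mono) auto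
  also have "\<dots> \<le> exp (- (\<theta> * ln (1 - x)))" using exp_ge_add_one_self[of "- (\<theta> * ln (1 - x))"] by simp
  also have "\<dots> = (1 - x) powr (- \<theta>)" using x1 by (simp add: powr_def)
  finally have growth: "1 + \<theta> * x \<le> (1 - x) powr (- \<theta>)" .
  have "A powr (- \<theta>) * (1 + \<theta> * x) \<le> A powr (- \<theta>) * (1 - x) powr (- \<theta>)"
    by (intro mult_left_mono growth) auto
  also have "\<dots> = (A * (1 - x)) powr (- \<theta>)" using assms x1 by (simp add: powr_mult)
  also have "\<dots> \<le> c powr (- \<theta>)" by (rule powr_mono2') (use assms in auto)
  finally show ?thesis by (simp add: algebra_simps)
qed

section \<open>Greedy interval covers and logarithmic measure\<close>

lemma finite_log_measure_of_interval_cover: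
  fixes c l :: "nat \<Rightarrow> real"
  assumes cover: "\<And>x. x \<in> F \<Longrightarrow> \<exists>k. c k \<le> x \<and> x \<le> c k + l k"
    and l: "\<And>k. 0 \<le> l k" "\<And>k. l k \<le> 1" "summable l"
  shows "finite_log_measure {t. 0 < t \<and> ln t \<in> F}"
  unfolding finite_log_measure_def
proof -
  define f where "f k t = ennreal (exp (- c k)) * indicator {exp (c k) .. exp (c k + l k)} t" for k t
  have pointwise: "ennreal (indicator {t. 0 < t \<and> ln t \<in> F} t / t) \<le> (\<Sum>k. f k t)" for t
  proof (cases "0 < t \<and> ln t \<in> F")
    case True
    then obtain k where k: "c k \<le> ln t" "ln t \<le> c k + l k" using cover by blast
    then have "exp (c k) \<le> t" "t \<le> exp (c k + l k)"
      using True by (metis exp_le_cancel_iff exp_ln)+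
    then have "ennreal (indicator {t. 0 < t \<and> ln t \<in> F} t / t) \<le> f k t"
      using True by (auto simp: f_def exp_minus field_simps intro!: ennreal_leI)
    also have "\<dots> \<le> (\<Sum>k. f k t)"
      using sum_le_suminf[OF summableI, of "{k}" "\<lambda>k. f k t"] by simp
    finally show ?thesis .
  qed simp
  have integral: "(\<integral>\<^sup>+ t. f k t \<partial>lborel) \<le> ennreal (2 * l k)" for k
  proof -
    have le: "exp (c k) \<le> exp (c k + l k)" using l by simp
    have "(\<integral>\<^sup>+ t. f k t \<partial>lborel) = ennreal (exp (- c k) * (exp (c k + l k) - exp (c k)))"
      using le unfolding f_def by (simp add: nn_integral_cmult_indicator ennreal_mult)
    also have "exp (- c k) * (exp (c k + l k) - exp (c k)) = exp (l k) - 1"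
      by (simp add: algebra_simps exp_add exp_minus)
    also have "ennreal (exp (l k) - 1) \<le> ennreal (2 * l k)"
      using exp_minus_one_le_twice[OF l(1,2)] by (rule ennreal_leI)
    finally show ?thesis .
  qed
  have "(\<integral>\<^sup>+ t. ennreal (indicator {t. 0 < t \<and> ln t \<in> F} t / t) \<partial>lborel) \<le> (\<integral>\<^sup>+ t. (\<Sum>k. f k t) \<partial>lborel)"
    by (intro nn_integral_mono pointwise)
  also have "\<dots> = (\<Sum>k. \<integral>\<^sup>+ t. f k t \<partial>lborel)"
    by (rule nn_integral_suminf) (simp add: f_def)
  also have "\<dots> \<le> (\<Sum>k. ennreal (2 * l k))" by (intro suminf_le integral summableI)
  also have "\<dots> = ennreal (\<Sum>k. 2 * l k)"
    by (rule suminf_ennreal2) (use l in auto)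
  finally show "(\<integral>\<^sup>+ t. ennreal (indicator {t. 0 < t \<and> ln t \<in> F} t / t) \<partial>lborel) < \<infinity>"
    by (simp add: order_le_less_trans)
qed

locale greedy_interval_cover =
  fixes F :: "real set" and u :: "real \<Rightarrow> real" and s0 :: real
  assumes closed_F: "closed F" and F_ge: "F \<subseteq> {s0..}"
    and u_pos: "\<And>x. x \<in> F \<Longrightarrow> 0 < u x"
    and u_antimono: "\<And>x y. x \<in> F \<Longrightarrow> y \<in> F \<Longrightarrow> x \<le> y \<Longrightarrow> u y \<le> u x"
begin

definition next_point :: "real \<Rightarrow> real option" where
  "next_point x = (if F \<inter> {x..} = {} then None else Some (Inf (F \<inter> {x..})))"

primrec greedy :: "nat \<Rightarrow> real option" where
  "greedy 0 = next_point s0"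
| "greedy (Suc k) = (case greedy k of None \<Rightarrow> None | Some r \<Rightarrow> next_point (r + 2 * u r))"

lemma next_point_Some:
  assumes "next_point x = Some r"
  shows "r \<in> F" "x \<le> r" "\<And>y. y \<in> F \<Longrightarrow> x \<le> y \<Longrightarrow> r \<le> y"
proof -
  have ne: "F \<inter> {x..} \<noteq> {}" and r: "r = Inf (F \<inter> {x..})"
    using assms unfolding next_point_def by (auto split: if_splits)
  have bdd: "bdd_below (F \<inter> {x..})" by (rule bdd_belowI[of _ x]) auto
  have "r \<in> F \<inter> {x..}"
    unfolding r using closed_F by (intro closed_contains_Inf[OF ne bdd]) auto
  then show "r \<in> F" "x \<le> r" by auto
  show "\<And>y. y \<in> F \<Longrightarrow> x \<le> y \<Longrightarrow> r \<le> y" unfolding r using bdd by (intro cInf_lower) auto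
qed

lemma next_point_exists: "y \<in> F \<Longrightarrow> x \<le> y \<Longrightarrow> \<exists>r. next_point x = Some r"
  unfolding next_point_def by auto

lemma greedy_in_F: "greedy k = Some r \<Longrightarrow> r \<in> F"
  by (cases k) (auto split: option.splits dest: next_point_Some)

lemma greedy_SucD:
  assumes "greedy (Suc k) = Some r'"
  shows "\<exists>r. greedy k = Some r \<and> r + 2 * u r \<le> r'"
  using assms by (auto split: option.splits dest: next_point_Some)

lemma greedy_covers:
  assumes s: "s \<in> F"
  shows "\<exists>k r. greedy k = Some r \<and> r \<le> s \<and> s \<le> r + 2 * u r"
proof (rule ccontr)
  assume uncovered: "\<not> ?thesis"
  \<comment> \<open>While left of \<open>s\<close>, the greedy points advance by at least \<open>u s\<close> per step.\<close>
  have progress: "\<exists>r. greedy k = Some r \<and> r \<le> s \<and> s0 + real k * u s \<le> r" for k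
  proof (induction k)
    case 0
    have "s0 \<le> s" using s F_ge by auto
    then obtain r where r: "next_point s0 = Some r" using next_point_exists[OF s] by blast
    then show ?case using next_point_Some[OF r] s \<open>s0 \<le> s\<close> by auto
  next
    case (Suc k)
    then obtain r where r: "greedy k = Some r" "r \<le> s" "s0 + real k * u s \<le> r" by blast
    have "r + 2 * u r < s" using uncovered r by force
    then obtain r' where r': "next_point (r + 2 * u r) = Some r'"
      using next_point_exists[OF s, of "r + 2 * u r"] by auto
    have "u s \<le> u r" using u_antimono[OF greedy_in_F[OF r(1)] s r(2)] .
    moreover have "0 < u r" using u_pos[OF greedy_in_F[OF r(1)]] .
    moreover have "r' \<le> s" "r + 2 * u r \<le> r'"
      using next_point_Some[OF r'] s \<open>r + 2 * u r < s\<close> by auto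
    moreover have "greedy (Suc k) = Some r'" using r(1) r' by simp
    ultimately show ?case using r(3) by (intro exI[of _ r']) (simp add: algebra_simps)
  qed
  define k where "k = nat \<lceil>(s - s0) / u s\<rceil> + 1"
  have "(s - s0) / u s < real k" unfolding k_def by linarith
  then have "s - s0 < real k * u s" using u_pos[OF s] by (simp add: field_simps)
  then show False using progress[of k] by auto
qed

definition greedy_radius :: "nat \<Rightarrow> real" where
  "greedy_radius k = (case greedy k of None \<Rightarrow> 0 | Some r \<Rightarrow> u r)"

lemma greedy_radius_nonneg: "0 \<le> greedy_radius k"
  by (auto simp: greedy_radius_def split: option.split dest: greedy_in_F u_pos less_imp_le)

context
  fixes \<Phi> :: "real \<Rightarrow> real" and C c M :: real
  assumes potential: "\<And>r. r \<in> F \<Longrightarrow> u r \<le> C * (\<Phi> (r - u r) - \<Phi> (r + u r))"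
    and \<Phi>_antimono: "antimono_on {c..} \<Phi>"
    and \<Phi>_bounds: "\<And>x. c \<le> x \<Longrightarrow> 0 \<le> \<Phi> x" "\<And>x. c \<le> x \<Longrightarrow> \<Phi> x \<le> M"
    and C_nonneg: "0 \<le> C"
    and u_le_half: "\<And>x. x \<in> F \<Longrightarrow> u x \<le> 1 / 2"
    and F_ge_c: "F \<subseteq> {c + 1 / 2..}"
begin

lemma greedy_tail_nonneg: "0 \<le> (case greedy n of None \<Rightarrow> 0 | Some r \<Rightarrow> \<Phi> (r + u r))"
proof (cases "greedy n")
  case (Some r)
  then have "r \<in> F" by (rule greedy_in_F)
  then have "c \<le> r + u r" using F_ge_c u_pos[of r] by fastforce
  then show ?thesis using Some \<Phi>_bounds(1) by simp
qed simp

lemma greedy_radius_partial_sum_le: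
  "(\<Sum>k\<le>n. greedy_radius k) \<le> C * (M - (case greedy n of None \<Rightarrow> 0 | Some r \<Rightarrow> \<Phi> (r + u r)))"
proof (induction n)
  case 0
  show ?case
  proof (cases "greedy 0")
    case (Some r)
    then have r: "r \<in> F" by (rule greedy_in_F)
    then have "c \<le> r - u r" using u_le_half F_ge_c by fastforce
    then have "\<Phi> (r - u r) \<le> M" by (rule \<Phi>_bounds(2))
    then show ?thesis
      using potential[OF r] Some C_nonneg unfolding greedy_radius_def
      by (simp del: greedy.simps) (smt (verit) mult_left_mono)
  qed (use \<Phi>_bounds(1)[of c] \<Phi>_bounds(2)[of c] C_nonneg in \<open>simp add: greedy_radius_def\<close>)
next
  case (Suc n)
  show ?case
  proof (cases "greedy (Suc n)")
    case None
    have "0 \<le> C * (case greedy n of None \<Rightarrow> 0 | Some r \<Rightarrow> \<Phi> (r + u r))"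
      using C_nonneg greedy_tail_nonneg by simp
    then show ?thesis using Suc.IH None by (simp add: greedy_radius_def algebra_simps)
  next
    case (Some r')
    obtain r where r: "greedy n = Some r" "r + 2 * u r \<le> r'" using greedy_SucD[OF Some] by blast
    have rF: "r \<in> F" and r'F: "r' \<in> F" using greedy_in_F[OF r(1)] greedy_in_F[OF Some] .
    have "u r' \<le> u r" using u_antimono[OF rF r'F] u_pos[OF rF] r(2) by simp
    then have "r + u r \<le> r' - u r'" using r(2) by simp
    moreover have "c \<le> r + u r" using rF F_ge_c u_pos[OF rF] by fastforce
    ultimately have "\<Phi> (r' - u r') \<le> \<Phi> (r + u r)"
      using \<Phi>_antimono by (auto simp: monotone_on_def)
    then have "(\<Sum>k\<le>Suc n. greedy_radius k) \<le> C * (M - \<Phi> (r + u r)) + C * (\<Phi> (r + u r) - \<Phi> (r' + u r'))"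
      using Suc.IH potential[OF r'F] C_nonneg r(1) Some
      by (simp add: greedy_radius_def) (smt (verit) mult_left_mono)
    then show ?thesis using Some by (simp add: algebra_simps)
  qed
qed

lemma summable_greedy_radius: "summable greedy_radius"
proof (rule bounded_imp_summable[OF greedy_radius_nonneg])
  fix n
  have "0 \<le> C * (case greedy n of None \<Rightarrow> 0 | Some r \<Rightarrow> \<Phi> (r + u r))"
    using C_nonneg greedy_tail_nonneg by simp
  then show "(\<Sum>k\<le>n. greedy_radius k) \<le> C * M"
    using greedy_radius_partial_sum_le[of n] by (simp add: algebra_simps)
qed

lemma finite_log_measure_greedy_cover: "finite_log_measure {t. 0 < t \<and> ln t \<in> F}"
proof (rule finite_log_measure_of_interval_cover)
  show "\<exists>k. (case greedy k of None \<Rightarrow> 0 | Some r \<Rightarrow> r) \<le> s \<and>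
            s \<le> (case greedy k of None \<Rightarrow> 0 | Some r \<Rightarrow> r) + 2 * greedy_radius k" if s: "s \<in> F" for s
  proof -
    obtain k r where "greedy k = Some r" "r \<le> s" "s \<le> r + 2 * u r"
      using greedy_covers[OF s] by blast
    then show ?thesis by (intro exI[of _ k]) (simp add: greedy_radius_def)
  qed
  show "0 \<le> 2 * greedy_radius k" for k using greedy_radius_nonneg by simp
  show "2 * greedy_radius k \<le> 1" for k
    by (auto simp: greedy_radius_def split: option.split dest!: greedy_in_F u_le_half)
  show "summable (\<lambda>k. 2 * greedy_radius k)" by (intro summable_mult summable_greedy_radius)
qed

end

end

section \<open>The weight distribution of H\<close>

locale entire_sq_series =
  fixes a :: "nat \<Rightarrow> real"
  assumes summable_everywhere: "\<And>z::complex. summable (\<lambda>n. complex_of_real ((a n)\<^sup>2) * z ^ n)"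
    and infinite_support: "infinite {n. a n \<noteq> 0}"
begin

definition weight :: "real \<Rightarrow> nat \<Rightarrow> real" where
  "weight s n = (a n)\<^sup>2 * exp s ^ n"

definition moment :: "nat \<Rightarrow> real \<Rightarrow> real" where
  "moment k s = (\<Sum>n. real n ^ k * weight s n)"

definition moment_complex :: "nat \<Rightarrow> complex \<Rightarrow> complex" where
  "moment_complex k w = (\<Sum>n. of_nat n ^ k * complex_of_real ((a n)\<^sup>2) * exp w ^ n)"

lemma summable_real_power_series: "summable (\<lambda>n. (a n)\<^sup>2 * x ^ n)"
proof -
  have "summable (\<lambda>n. complex_of_real ((a n)\<^sup>2 * x ^ n))"
    using summable_everywhere[of "complex_of_real x"] by simp
  then show ?thesis by (simp only: summable_complex_of_real)
qed

lemma summable_moment: "summable (\<lambda>n. real n ^ k * weight s n)"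
  using summable_of_nat_power_mult_power_series[OF summable_real_power_series]
  by (simp add: weight_def mult.assoc)

lemma moment_has_real_derivative: "(moment k has_real_derivative moment (Suc k) s) (at s)"
proof -
  have "((\<lambda>s. \<Sum>n. (real n ^ k * (a n)\<^sup>2) * exp s ^ n) has_real_derivative
          (\<Sum>n. of_nat n * (real n ^ k * (a n)\<^sup>2) * exp s ^ n)) (at s)"
    by (rule has_field_derivative_power_series_exp)
      (use summable_of_nat_power_mult_power_series[OF summable_real_power_series] in simp)
  then show ?thesis unfolding moment_def weight_def by (simp add: algebra_simps)
qed

lemma moment_complex_has_field_derivative:
  "(moment_complex k has_field_derivative moment_complex (Suc k) w) (at w)"
proof -
  have "((\<lambda>w. \<Sum>n. (of_nat n ^ k * complex_of_real ((a n)\<^sup>2)) * exp w ^ n) has_field_derivative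
          (\<Sum>n. of_nat n * (of_nat n ^ k * complex_of_real ((a n)\<^sup>2)) * exp w ^ n)) (at w)"
    by (rule has_field_derivative_power_series_exp)
      (use summable_of_nat_power_mult_power_series[OF summable_everywhere] in simp)
  then show ?thesis unfolding moment_complex_def by (simp add: algebra_simps)
qed

lemma moment_complex_of_real: "moment_complex k (complex_of_real s) = complex_of_real (moment k s)"
proof -
  have "moment_complex k (complex_of_real s) = (\<Sum>n. complex_of_real (real n ^ k * weight s n))"
    unfolding moment_complex_def weight_def by (simp add: exp_of_real mult.assoc)
  also have "\<dots> = complex_of_real (moment k s)"
    unfolding moment_def by (rule suminf_of_real[symmetric, OF summable_moment])
  finally show ?thesis .
qed

lemma weight_nonneg: "0 \<le> weight s n"
  by (simp add: weight_def)

lemma weight_le_moment_0: "weight s n \<le> moment 0 s"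
  using sum_le_suminf[OF summable_moment, of "{n}" 0 s] weight_nonneg by (simp add: moment_def)

lemma moment_nonneg: "0 \<le> moment k s"
  unfolding moment_def by (intro suminf_nonneg summable_moment mult_nonneg_nonneg weight_nonneg) auto

lemma weight_pos_iff: "0 < weight s n \<longleftrightarrow> a n \<noteq> 0"
  by (simp add: weight_def zero_less_mult_iff)

lemma moment_0_pos: "0 < moment 0 s"
proof -
  obtain m where "a m \<noteq> 0" using infinite_support not_finite_existsD by auto
  then show ?thesis
    unfolding moment_def using summable_moment[of 0 s] weight_nonneg
    by (intro suminf_pos2[of _ m]) (auto simp: weight_pos_iff)
qed

lemma H_fun_eq: "H_fun a = moment_complex 0"
  by (rule ext) (simp add: H_fun_def G_fun_def moment_complex_def)

lemma H_fun_of_real: "H_fun a (complex_of_real s) = complex_of_real (moment 0 s)"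
  by (simp add: H_fun_eq moment_complex_of_real)

lemma A_fun_eq: "A_fun a = (\<lambda>w. moment_complex 1 w / moment_complex 0 w)"
  by (rule ext) (simp add: A_fun_def H_fun_eq DERIV_imp_deriv[OF moment_complex_has_field_derivative])

definition lnH :: "real \<Rightarrow> real" where
  "lnH s = ln (moment 0 s)"

definition mean :: "real \<Rightarrow> real" where
  "mean s = moment 1 s / moment 0 s"

definition variance :: "real \<Rightarrow> real" where
  "variance s = (moment 2 s * moment 0 s - moment 1 s * moment 1 s) / (moment 0 s)\<^sup>2"

lemma A_fun_of_real: "A_fun a (complex_of_real s) = complex_of_real (mean s)"
  by (simp add: A_fun_eq moment_complex_of_real mean_def)

lemma B_fun_of_real: "B_fun a (complex_of_real s) = complex_of_real (variance s)"
proof -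
  let ?M = "\<lambda>k. moment_complex k (complex_of_real s)"
  have "?M 0 \<noteq> 0" using moment_0_pos[of s] by (simp add: moment_complex_of_real)
  from DERIV_divide[OF moment_complex_has_field_derivative moment_complex_has_field_derivative this]
  have "B_fun a (complex_of_real s) = (?M 2 * ?M 0 - ?M 1 * ?M 1) / (?M 0 * ?M 0)"
    unfolding B_fun_def A_fun_eq by (intro DERIV_imp_deriv) (simp add: numeral_2_eq_2)
  then show ?thesis by (simp add: moment_complex_of_real variance_def power2_eq_square)
qed

lemma lnH_has_real_derivative: "(lnH has_real_derivative mean s) (at s)"
  using DERIV_chain2[OF DERIV_ln_divide[OF moment_0_pos] moment_has_real_derivative[of 0]]
  by (simp add: lnH_def[abs_def] mean_def)

lemma mean_has_real_derivative: "(mean has_real_derivative variance s) (at s)"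
  using DERIV_divide[OF moment_has_real_derivative moment_has_real_derivative, of 0 s 1]
    moment_0_pos[of s]
  by (simp add: mean_def[abs_def] variance_def power2_eq_square numeral_2_eq_2)

lemma continuous_on_mean: "continuous_on S mean"
  using mean_has_real_derivative by (meson DERIV_isCont continuous_at_imp_continuous_on)

lemma weight_sums: "(\<lambda>n. weight s n) sums moment 0 s"
  using summable_moment[of 0 s] by (simp add: moment_def summable_sums)

lemma weight_centered_sums: "(\<lambda>n. weight s n * (real n - mean s)) sums 0"
proof -
  have "(\<lambda>n. real n ^ 1 * weight s n - mean s * (real n ^ 0 * weight s n))
          sums (moment 1 s - mean s * moment 0 s)"
    unfolding moment_def by (intro sums_diff sums_mult summable_sums summable_moment)
  then show ?thesis
    using moment_0_pos[of s] by (simp add: mean_def algebra_simps)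
qed

lemma weight_centered_square_sums:
  "(\<lambda>n. weight s n * (real n - mean s)\<^sup>2) sums (variance s * moment 0 s)"
proof -
  have "(\<lambda>n. real n ^ 2 * weight s n - 2 * mean s * (real n ^ 1 * weight s n)
            + (mean s)\<^sup>2 * (real n ^ 0 * weight s n))
          sums (moment 2 s - 2 * mean s * moment 1 s + (mean s)\<^sup>2 * moment 0 s)"
    unfolding moment_def by (intro sums_add sums_diff sums_mult summable_sums summable_moment)
  moreover have "moment 2 s - 2 * mean s * moment 1 s + (mean s)\<^sup>2 * moment 0 s = variance s * moment 0 s"
    using moment_0_pos[of s] by (simp add: mean_def variance_def field_simps power2_eq_square)
  ultimately show ?thesis by (simp add: power2_eq_square algebra_simps)
qed

lemma variance_nonneg: "0 \<le> variance s"
proof -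
  have "0 \<le> (\<Sum>n. weight s n * (real n - mean s)\<^sup>2)"
    using weight_centered_square_sums[of s] weight_nonneg
    by (intro suminf_nonneg) (auto simp: sums_iff)
  then have "0 \<le> variance s * moment 0 s"
    using weight_centered_square_sums[of s] by (simp add: sums_iff)
  then show ?thesis using moment_0_pos[of s] by (simp add: zero_le_mult_iff)
qed

lemma mean_mono: "x \<le> y \<Longrightarrow> mean x \<le> mean y"
  by (rule DERIV_nonneg_imp_nondecreasing[of x y mean])
    (use mean_has_real_derivative variance_nonneg in blast)+


lemma lnH_diff_ge: "x \<le> y \<Longrightarrow> (y - x) * mean x \<le> lnH y - lnH x"
proof (cases "x = y")
  case False
  assume "x \<le> y"
  then obtain z where "x < z" "z < y" "lnH y - lnH x = (y - x) * mean z"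
    using MVT2[of x y lnH mean] lnH_has_real_derivative False by force
  then show ?thesis using mean_mono[of x z] by (simp add: mult_left_mono)
qed simp

lemma lnH_diff_le: "x \<le> y \<Longrightarrow> lnH y - lnH x \<le> (y - x) * mean y"
proof (cases "x = y")
  case False
  assume "x \<le> y"
  then obtain z where "x < z" "z < y" "lnH y - lnH x = (y - x) * mean z"
    using MVT2[of x y lnH mean] lnH_has_real_derivative False by force
  then show ?thesis using mean_mono[of z y] by (simp add: mult_left_mono)
qed simp

definition gap :: "real \<Rightarrow> real \<Rightarrow> real" where
  "gap s v = lnH (s + v) - lnH s - v * mean s"

lemma gap_le: "0 \<le> v \<Longrightarrow> gap s v \<le> v * (mean (s + v) - mean s)"
  using lnH_diff_le[of s "s + v"] by (simp add: gap_def algebra_simps)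

lemma gap_minus_le: "0 \<le> v \<Longrightarrow> gap s (- v) \<le> v * (mean s - mean (s - v))"
  using lnH_diff_ge[of "s - v" s] by (simp add: gap_def algebra_simps)

lemma mean_ge_index:
  assumes "a m \<noteq> 0" "0 < s"
  shows "real m - (lnH 0 - ln ((a m)\<^sup>2)) / s \<le> mean s"
proof -
  have "ln ((a m)\<^sup>2) + real m * s = ln (weight s m)"
    using assms by (simp add: weight_def ln_mult ln_realpow)
  also have "\<dots> \<le> lnH s"
    unfolding lnH_def using assms
    by (subst ln_le_cancel_iff) (auto simp: weight_pos_iff moment_0_pos weight_le_moment_0)
  also have "\<dots> \<le> lnH 0 + s * mean s" using lnH_diff_le[of 0 s] assms by simp
  finally show ?thesis using assms by (simp add: field_simps)
qed

lemma filterlim_mean_at_top: "filterlim mean at_top at_top"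
proof (rule filterlim_at_top_dense[THEN iffD2], intro allI)
  fix Z :: real
  obtain m where m: "a m \<noteq> 0" "nat \<lceil>Z\<rceil> < m"
    using infinite_support unfolding infinite_nat_iff_unbounded by auto
  have "((\<lambda>s. real m - c / s) \<longlongrightarrow> real m) at_top" for c :: real
    by real_asymp
  moreover have "Z < real m" using m(2) by linarith
  ultimately have "eventually (\<lambda>s. Z < real m - (lnH 0 - ln ((a m)\<^sup>2)) / s) at_top"
    by (rule order_tendstoD(1))
  with eventually_gt_at_top[of 0] show "eventually (\<lambda>s. Z < mean s) at_top"
    by eventually_elim (use mean_ge_index[OF m(1)] in fastforce)
qed


lemma weight_shift: "weight (s + v) n = weight s n * exp (v * real n)"
  by (simp add: weight_def exp_add power_mult_distrib mult_ac flip: exp_of_nat_mult)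

lemma weight_exp_shift_sums:
  "(\<lambda>n. weight s n * exp (v * (real n - mean s))) sums (moment 0 s * exp (gap s v))"
proof -
  have "(\<lambda>n. weight (s + v) n * exp (- v * mean s)) sums (moment 0 (s + v) * exp (- v * mean s))"
    by (intro sums_mult2 weight_sums)
  moreover have "weight (s + v) n * exp (- v * mean s) = weight s n * exp (v * (real n - mean s))" for n
  proof -
    have "exp (v * real n) * exp (- v * mean s) = exp (v * (real n - mean s))"
      by (simp add: right_diff_distrib flip: exp_add)
    then show ?thesis by (simp add: weight_shift mult.assoc)
  qed
  moreover have "moment 0 (s + v) * exp (- v * mean s) = moment 0 s * exp (gap s v)"
    using moment_0_pos[of s] moment_0_pos[of "s + v"]
    by (simp add: gap_def lnH_def exp_diff exp_minus divide_inverse)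
  ultimately show ?thesis by simp
qed

definition bounded_gap :: "real \<Rightarrow> real \<Rightarrow> bool" where
  "bounded_gap s v \<longleftrightarrow> 0 < v \<and> gap s v \<le> 2 \<and> gap s (- v) \<le> 2"

lemma bounded_gap_exp_moments:
  assumes "bounded_gap s v"
  obtains S where
    "(\<lambda>n. weight s n * (exp (v * (real n - mean s)) + exp (- (v * (real n - mean s))))) sums S"
    "S \<le> 2 * exp 2 * moment 0 s"
proof
  let ?S = "moment 0 s * exp (gap s v) + moment 0 s * exp (gap s (- v))"
  show "(\<lambda>n. weight s n * (exp (v * (real n - mean s)) + exp (- (v * (real n - mean s))))) sums ?S"
    using sums_add[OF weight_exp_shift_sums[of s v] weight_exp_shift_sums[of s "- v"]]
    by (simp add: algebra_simps)
  have "exp (gap s v) \<le> exp 2" "exp (gap s (- v)) \<le> exp 2"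
    using assms by (auto simp: bounded_gap_def)
  then have "?S \<le> moment 0 s * exp 2 + moment 0 s * exp 2"
    using moment_nonneg by (intro add_mono mult_left_mono)
  then show "?S \<le> 2 * exp 2 * moment 0 s" by (simp add: mult_ac)
qed

lemma variance_le_of_bounded_gap:
  assumes "bounded_gap s v"
  shows "variance s \<le> 4 * exp 2 / v\<^sup>2"
proof -
  have v: "0 < v" using assms by (simp add: bounded_gap_def)
  obtain S where S: "(\<lambda>n. weight s n * (exp (v * (real n - mean s)) + exp (- (v * (real n - mean s))))) sums S"
    "S \<le> 2 * exp 2 * moment 0 s"
    using bounded_gap_exp_moments[OF assms] by blast
  have "variance s * moment 0 s \<le> 2 / v\<^sup>2 * S"
  proof (rule sums_le[OF _ weight_centered_square_sums sums_mult[OF S(1)]])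
    show "weight s n * (real n - mean s)\<^sup>2 \<le>
            2 / v\<^sup>2 * (weight s n * (exp (v * (real n - mean s)) + exp (- (v * (real n - mean s)))))" for n
      using mult_left_mono[OF square_le_exp_plus_exp_minus[OF v, of "real n - mean s"] weight_nonneg[of s n]]
      by (simp only: ac_simps)
  qed
  also have "\<dots> \<le> 4 * exp 2 / v\<^sup>2 * moment 0 s"
    using mult_left_mono[OF S(2), of "2 / v\<^sup>2"] by simp
  finally have "variance s * moment 0 s \<le> 4 * exp 2 / v\<^sup>2 * moment 0 s" .
  then show ?thesis using moment_0_pos[of s] by (simp only: mult_le_cancel_right_pos)
qed

lemma third_moment_le_of_bounded_gap:
  assumes "bounded_gap s v" "0 \<le> r" "r \<le> v / 2"
  defines "f \<equiv> \<lambda>n. weight s n * (\<bar>real n - mean s\<bar> ^ 3 * exp (r * \<bar>real n - mean s\<bar>))"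
  shows "summable f" "suminf f \<le> 96 * exp 2 / v ^ 3 * moment 0 s"
proof -
  have v: "0 < v" using assms by (simp add: bounded_gap_def)
  obtain S where S: "(\<lambda>n. weight s n * (exp (v * (real n - mean s)) + exp (- (v * (real n - mean s))))) sums S"
    "S \<le> 2 * exp 2 * moment 0 s"
    using bounded_gap_exp_moments[OF assms(1)] by blast
  have g: "(\<lambda>n. 48 / v ^ 3 * (weight s n * (exp (v * (real n - mean s)) + exp (- (v * (real n - mean s))))))
            sums (48 / v ^ 3 * S)"
    by (rule sums_mult[OF S(1)])
  have le: "f n \<le> 48 / v ^ 3 * (weight s n * (exp (v * (real n - mean s)) + exp (- (v * (real n - mean s)))))" for n
    using mult_left_mono[OF abs_cube_mult_exp_le_exp_plus_exp_minus[OF v assms(2,3), of "real n - mean s"]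
        weight_nonneg[of s n]]
    by (simp only: f_def ac_simps)
  show "summable f"
    by (rule summable_comparison_test'[OF sums_summable[OF g], of 0])
      (use le in \<open>auto simp: f_def weight_nonneg\<close>)
  then have "suminf f \<le> 48 / v ^ 3 * S" by (intro sums_le[OF le _ g] summable_sums)
  also have "\<dots> \<le> 96 * exp 2 / v ^ 3 * moment 0 s"
    using mult_left_mono[OF S(2), of "48 / v ^ 3"] v by simp
  finally show "suminf f \<le> 96 * exp 2 / v ^ 3 * moment 0 s" .
qed


definition centered_ratio :: "real \<Rightarrow> complex \<Rightarrow> complex" where
  "centered_ratio s \<tau> =
     H_fun a (complex_of_real s + \<tau>) / (H_fun a (complex_of_real s) * exp (\<tau> * complex_of_real (mean s)))"

lemma H_fun_shift_sums:
  "(\<lambda>n. complex_of_real (weight s n) * exp (\<tau> * complex_of_real (real n - mean s)))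
     sums (H_fun a (complex_of_real s + \<tau>) * exp (- \<tau> * complex_of_real (mean s)))"
proof -
  have "(\<lambda>n. (complex_of_real ((a n)\<^sup>2) * exp (complex_of_real s + \<tau>) ^ n) * exp (- \<tau> * complex_of_real (mean s)))
          sums (H_fun a (complex_of_real s + \<tau>) * exp (- \<tau> * complex_of_real (mean s)))"
    unfolding H_fun_def G_fun_def by (intro sums_mult2 summable_sums summable_everywhere)
  moreover have "(complex_of_real ((a n)\<^sup>2) * exp (complex_of_real s + \<tau>) ^ n) * exp (- \<tau> * complex_of_real (mean s))
      = complex_of_real (weight s n) * exp (\<tau> * complex_of_real (real n - mean s))" for n
  proof -
    have "exp (\<tau> * complex_of_real (real n - mean s)) = exp \<tau> ^ n * exp (- \<tau> * complex_of_real (mean s))"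
      by (simp add: algebra_simps flip: exp_add exp_of_nat_mult)
    then show ?thesis by (simp add: weight_def exp_add power_mult_distrib exp_of_real mult_ac)
  qed
  ultimately show ?thesis by simp
qed

lemma centered_ratio_expansion_sums:
  fixes s :: real and \<tau> :: complex
  defines "X \<equiv> \<lambda>n. complex_of_real (real n - mean s)"
  shows "(\<lambda>n. complex_of_real (weight s n) * (exp (\<tau> * X n) - 1 - \<tau> * X n - (\<tau> * X n)\<^sup>2 / 2))
           sums (complex_of_real (moment 0 s) * (centered_ratio s \<tau> - 1 - \<tau>\<^sup>2 * complex_of_real (variance s) / 2))"
proof -
  let ?M = "complex_of_real (moment 0 s)"
  have centered: "(\<lambda>n. complex_of_real (weight s n * (real n - mean s))) sums 0"
    using sums_of_real[OF weight_centered_sums] by simp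
  have "(\<lambda>n. complex_of_real (weight s n) * exp (\<tau> * X n) - complex_of_real (weight s n)
            - \<tau> * complex_of_real (weight s n * (real n - mean s))
            - \<tau>\<^sup>2 / 2 * complex_of_real (weight s n * (real n - mean s)\<^sup>2))
          sums (H_fun a (complex_of_real s + \<tau>) * exp (- \<tau> * complex_of_real (mean s)) - ?M
                - \<tau> * 0 - \<tau>\<^sup>2 / 2 * complex_of_real (variance s * moment 0 s))"
    unfolding X_def
    by (intro sums_diff sums_mult H_fun_shift_sums weight_sums[THEN sums_of_real] centered
        weight_centered_square_sums[THEN sums_of_real])
  moreover have "(\<lambda>n. complex_of_real (weight s n) * exp (\<tau> * X n) - complex_of_real (weight s n)
            - \<tau> * complex_of_real (weight s n * (real n - mean s))
            - \<tau>\<^sup>2 / 2 * complex_of_real (weight s n * (real n - mean s)\<^sup>2))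
      = (\<lambda>n. complex_of_real (weight s n) * (exp (\<tau> * X n) - 1 - \<tau> * X n - (\<tau> * X n)\<^sup>2 / 2))"
    by (rule ext) (simp add: X_def power2_eq_square field_simps)
  moreover have "H_fun a (complex_of_real s + \<tau>) * exp (- \<tau> * complex_of_real (mean s)) - ?M
                - \<tau> * 0 - \<tau>\<^sup>2 / 2 * complex_of_real (variance s * moment 0 s)
      = ?M * (centered_ratio s \<tau> - 1 - \<tau>\<^sup>2 * complex_of_real (variance s) / 2)"
    using moment_0_pos[of s] by (simp add: centered_ratio_def H_fun_of_real exp_minus field_simps)
  ultimately show ?thesis by simp
qed

lemma centered_ratio_taylor:
  assumes "bounded_gap s v" "norm \<tau> \<le> v / 2"
  shows "norm (centered_ratio s \<tau> - 1 - \<tau>\<^sup>2 * complex_of_real (variance s) / 2) \<le> 48 * exp 2 * norm \<tau> ^ 3 / v ^ 3"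
proof -
  define X where "X n = real n - mean s" for n
  define T where "T n = complex_of_real (weight s n) * (exp (\<tau> * complex_of_real (X n)) - 1
      - \<tau> * complex_of_real (X n) - (\<tau> * complex_of_real (X n))\<^sup>2 / 2)" for n
  define f where "f n = weight s n * (\<bar>X n\<bar> ^ 3 * exp (norm \<tau> * \<bar>X n\<bar>))" for n
  have f: "summable f" "suminf f \<le> 96 * exp 2 / v ^ 3 * moment 0 s"
    unfolding f_def X_def using third_moment_le_of_bounded_gap[OF assms(1) norm_ge_zero assms(2)] by auto
  have T_le: "norm (T n) \<le> norm \<tau> ^ 3 / 2 * f n" for n
  proof -
    let ?z = "\<tau> * complex_of_real (X n)"
    have "norm (T n) = weight s n * norm (exp ?z - 1 - ?z - ?z\<^sup>2 / 2)"
      by (simp add: T_def norm_mult weight_nonneg)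
    also have "\<dots> \<le> weight s n * (exp (norm ?z) * norm ?z ^ 3 / 2)"
      by (intro mult_left_mono norm_exp_minus_quadratic_le weight_nonneg)
    finally show ?thesis by (simp add: f_def norm_mult power_mult_distrib mult_ac)
  qed
  have summable_T: "summable (\<lambda>n. norm (T n))"
    by (rule summable_comparison_test'[OF summable_mult[OF f(1), of "norm \<tau> ^ 3 / 2"], of 0])
      (use T_le in auto)
  let ?Z = "centered_ratio s \<tau> - 1 - \<tau>\<^sup>2 * complex_of_real (variance s) / 2"
  have "moment 0 s * norm ?Z = norm (suminf T)"
    using centered_ratio_expansion_sums[of s \<tau>] moment_0_pos[of s]
    unfolding T_def X_def by (simp add: sums_iff norm_mult)
  also have "\<dots> \<le> (\<Sum>n. norm \<tau> ^ 3 / 2 * f n)"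
    by (rule order_trans[OF summable_norm[OF summable_T] suminf_le[OF T_le summable_T summable_mult[OF f(1)]]])
  also have "\<dots> = norm \<tau> ^ 3 / 2 * suminf f" by (rule suminf_mult[OF f(1)])
  also have "\<dots> \<le> norm \<tau> ^ 3 / 2 * (96 * exp 2 / v ^ 3 * moment 0 s)"
    by (intro mult_left_mono f(2)) auto
  also have "\<dots> = moment 0 s * (48 * exp 2 * norm \<tau> ^ 3 / v ^ 3)"
    by (simp add: field_simps)
  finally show ?thesis using moment_0_pos[of s] by (simp only: mult_le_cancel_left_pos)
qed

end

section \<open>Local expansion of log H\<close>

definition local_log_expansion ::
  "(complex \<Rightarrow> complex) \<Rightarrow> complex \<Rightarrow> complex \<Rightarrow> real \<Rightarrow> real \<Rightarrow> real \<Rightarrow> bool" where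
  "local_log_expansion H A B t \<rho> \<epsilon> \<longleftrightarrow>
    (\<exists>L. continuous_on (cball 0 \<rho>) L \<and> L holomorphic_on ball 0 \<rho> \<and> L 0 = 0 \<and>
       (\<forall>\<tau>. norm \<tau> \<le> \<rho> \<longrightarrow>
          exp (L \<tau>) = H (of_real t + \<tau>) / H (of_real t) \<and>
          norm (L \<tau> - (\<tau> * A + \<tau>\<^sup>2 * B / 2)) \<le> \<epsilon> * (norm \<tau>)\<^sup>2 * Re B))"

lemma local_delta_admissible_iff:
  "local_delta_admissible H A B \<delta> T \<longleftrightarrow>
    (\<forall>\<epsilon>>0. \<exists>\<eta>>0. \<exists>t0. \<forall>t\<in>T. t0 < t \<longrightarrow>
       local_log_expansion H (A (of_real t)) (B (of_real t)) t (\<eta> * \<delta> t) \<epsilon>)"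
  by (simp add: local_delta_admissible_def local_log_expansion_def)

lemma local_log_expansion_of_quadratic_approx:
  fixes H F :: "complex \<Rightarrow> complex" and E :: "real \<Rightarrow> real"
  assumes F_def: "\<And>\<tau>. F \<tau> = H (of_real t + \<tau>) / (H (of_real t) * exp (\<tau> * of_real m))"
    and F_holo: "F holomorphic_on cball 0 \<rho>" and H_nonzero: "H (of_real t) \<noteq> 0" and "0 \<le> b"
    and approx: "\<And>\<tau>. norm \<tau> \<le> \<rho> \<Longrightarrow> norm (F \<tau> - 1 - \<tau>\<^sup>2 * of_real b / 2) \<le> E (norm \<tau>)"
    and small: "\<And>r. 0 \<le> r \<Longrightarrow> r \<le> \<rho> \<Longrightarrow> r\<^sup>2 * b / 2 + E r \<le> 1 / 2"
    and precise: "\<And>r. 0 \<le> r \<Longrightarrow> r \<le> \<rho> \<Longrightarrow> 2 * (r\<^sup>2 * b / 2 + E r)\<^sup>2 + E r \<le> \<epsilon> * r\<^sup>2 * b"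
  shows "local_log_expansion H (of_real m) (of_real b) t \<rho> \<epsilon>"
proof -
  have F_near_1: "norm (F \<tau> - 1) \<le> (norm \<tau>)\<^sup>2 * b / 2 + E (norm \<tau>)" if "norm \<tau> \<le> \<rho>" for \<tau>
  proof -
    have "norm (F \<tau> - 1) \<le> norm (\<tau>\<^sup>2 * of_real b / 2) + norm (F \<tau> - 1 - \<tau>\<^sup>2 * of_real b / 2)"
      by (metis add.commute diff_add_cancel norm_triangle_ineq)
    then show ?thesis using approx[OF that] \<open>0 \<le> b\<close> by (simp add: norm_mult norm_power)
  qed
  have F_slit: "F \<tau> \<notin> \<real>\<^sub>\<le>\<^sub>0" if "\<tau> \<in> cball 0 \<rho>" for \<tau>
  proof -
    have "\<bar>Re (F \<tau> - 1)\<bar> \<le> 1 / 2"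
      using F_near_1[of \<tau>] small[of "norm \<tau>"] that abs_Re_le_cmod[of "F \<tau> - 1"] by simp
    then show ?thesis by (auto simp: complex_nonpos_Reals_iff)
  qed
  define L where "L \<tau> = \<tau> * of_real m + ln (F \<tau>)" for \<tau>
  have L_holo: "L holomorphic_on cball 0 \<rho>"
    unfolding L_def[abs_def] by (intro holomorphic_intros holomorphic_on_Ln' F_slit F_holo)
  have "F 0 = 1" using F_def H_nonzero by simp
  moreover have "exp (L \<tau>) = H (of_real t + \<tau>) / H (of_real t) \<and>
      norm (L \<tau> - (\<tau> * of_real m + \<tau>\<^sup>2 * of_real b / 2)) \<le> \<epsilon> * (norm \<tau>)\<^sup>2 * Re (of_real b)"
    if \<tau>: "norm \<tau> \<le> \<rho>" for \<tau>
  proof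
    have "F \<tau> \<noteq> 0" using F_slit[of \<tau>] \<tau> by auto
    then show "exp (L \<tau>) = H (of_real t + \<tau>) / H (of_real t)"
      using H_nonzero by (simp add: L_def F_def exp_add field_simps)
    define S where "S = (norm \<tau>)\<^sup>2 * b / 2 + E (norm \<tau>)"
    have S: "norm (F \<tau> - 1) \<le> S" "S \<le> 1 / 2"
      unfolding S_def using F_near_1[OF \<tau>] small[OF norm_ge_zero \<tau>] by auto
    have ln_approx: "norm (ln (F \<tau>) - (F \<tau> - 1)) \<le> 2 * S\<^sup>2" by (rule norm_Ln_minus_linear_le[OF S])
    have "L \<tau> - (\<tau> * of_real m + \<tau>\<^sup>2 * of_real b / 2)
        = (ln (F \<tau>) - (F \<tau> - 1)) + (F \<tau> - 1 - \<tau>\<^sup>2 * of_real b / 2)"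
      by (simp add: L_def algebra_simps)
    then have "norm (L \<tau> - (\<tau> * of_real m + \<tau>\<^sup>2 * of_real b / 2)) \<le> 2 * S\<^sup>2 + E (norm \<tau>)"
      using ln_approx approx[OF \<tau>] norm_triangle_ineq by (smt (verit))
    also have "\<dots> \<le> \<epsilon> * (norm \<tau>)\<^sup>2 * Re (of_real b)" using precise[OF norm_ge_zero \<tau>] by (simp add: S_def)
    finally show "norm (L \<tau> - (\<tau> * of_real m + \<tau>\<^sup>2 * of_real b / 2)) \<le> \<epsilon> * (norm \<tau>)\<^sup>2 * Re (of_real b)" .
  qed
  moreover have "continuous_on (cball 0 \<rho>) L" "L holomorphic_on ball 0 \<rho>"
    using L_holo holomorphic_on_imp_continuous_on holomorphic_on_subset ball_subset_cball by blast+
  ultimately show ?thesis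
    unfolding local_log_expansion_def by (intro exI[of _ L]) (simp add: L_def)
qed

lemma expansion_factor_bounds:
  fixes C0 C1 \<epsilon> :: real
  assumes "0 < C0" "0 < C1" "0 < \<epsilon>"
  defines "\<eta> \<equiv> min \<epsilon> 1 / (2 * C1 + 4 * C0 ^ 3 + 2 * C0 + 1)"
  shows "0 < \<eta>" "\<eta> * C0 \<le> 1 / 2" "\<eta> * C1 \<le> 1 / 2" "\<eta>\<^sup>2 * C0 ^ 3 \<le> 1 / 4"
    "2 * \<eta>\<^sup>2 * C0 ^ 3 + \<eta> * C1 \<le> \<epsilon>"
proof -
  define D where "D = 2 * C1 + 4 * C0 ^ 3 + 2 * C0 + 1"
  have C03: "0 < C0 ^ 3" using assms by simp
  have D: "1 \<le> D" "2 * C1 \<le> D" "4 * C0 ^ 3 \<le> D" "2 * C0 \<le> D"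
    unfolding D_def using assms C03 by linarith+
  have \<eta>D: "\<eta> * D = min \<epsilon> 1" using D(1) by (simp add: \<eta>_def D_def[symmetric])
  have \<eta>0: "0 < \<eta>" using D(1) assms by (simp add: \<eta>_def D_def[symmetric])
  have \<eta>: "0 < \<eta>" "\<eta> \<le> 1" "\<eta> * D \<le> \<epsilon>" "\<eta> * D \<le> 1"
    using \<eta>D \<eta>0 mult_left_mono[OF D(1), of \<eta>] by auto
  have \<eta>sq: "\<eta>\<^sup>2 \<le> \<eta>" using \<eta> by (simp add: power2_eq_square mult_left_le_one_le)
  show "0 < \<eta>" by (fact \<eta>(1))
  show "\<eta> * C0 \<le> 1 / 2" using mult_left_mono[OF D(4), of \<eta>] \<eta> by linarith
  show "\<eta> * C1 \<le> 1 / 2" using mult_left_mono[OF D(2), of \<eta>] \<eta> by linarith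
  have "\<eta>\<^sup>2 * C0 ^ 3 \<le> \<eta> * C0 ^ 3" using \<eta>sq C03 by (simp add: mult_right_mono)
  moreover have "4 * (\<eta> * C0 ^ 3) \<le> \<eta> * D" using mult_left_mono[OF D(3), of \<eta>] \<eta> by linarith
  ultimately show "\<eta>\<^sup>2 * C0 ^ 3 \<le> 1 / 4" "2 * \<eta>\<^sup>2 * C0 ^ 3 + \<eta> * C1 \<le> \<epsilon>"
    using mult_left_mono[OF D(2), of \<eta>] \<eta> by linarith+
qed

lemma cubic_error_estimates:
  fixes K b r \<eta> C0 C1 \<epsilon> :: real
  assumes K: "0 < K" and b: "0 \<le> b" "b \<le> C0 * K\<^sup>2" and r: "0 \<le> r" "r \<le> \<eta> * (b / K ^ 3)"
    and \<eta>: "0 \<le> \<eta>" "\<eta> * C0 \<le> 1 / 2" "\<eta> * C1 \<le> 1 / 2" "\<eta>\<^sup>2 * C0 ^ 3 \<le> 1 / 4"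
      "2 * \<eta>\<^sup>2 * C0 ^ 3 + \<eta> * C1 \<le> \<epsilon>"
    and "0 \<le> C1"
  defines "E \<equiv> C1 * r ^ 3 * K ^ 3"
  shows "r \<le> 1 / (2 * K)" "r\<^sup>2 * b / 2 + E \<le> 1 / 2" "2 * (r\<^sup>2 * b / 2 + E)\<^sup>2 + E \<le> \<epsilon> * r\<^sup>2 * b"
proof -
  define q where "q = r\<^sup>2 * b"
  have rK: "r * K ^ 3 \<le> \<eta> * b" using r K by (simp add: field_simps)
  have "r \<le> \<eta> * (C0 * K\<^sup>2 / K ^ 3)"
    using r(2) \<eta>(1) b K by (meson divide_right_mono mult_left_mono order_trans zero_le_power less_imp_le)
  then have r_le: "r \<le> \<eta> * C0 / K" using K by (simp add: power2_eq_square power3_eq_cube)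
  also have "\<dots> \<le> (1 / 2) / K" using \<eta>(2) K by (intro divide_right_mono) auto
  finally show "r \<le> 1 / (2 * K)" by simp
  have q: "0 \<le> q" "q \<le> \<eta>\<^sup>2 * C0 ^ 3"
  proof -
    have "q \<le> (\<eta> * C0 / K)\<^sup>2 * (C0 * K\<^sup>2)"
      unfolding q_def using r_le r(1) b by (intro mult_mono power_mono) auto
    then show "q \<le> \<eta>\<^sup>2 * C0 ^ 3" using K by (simp add: field_simps power2_eq_square power3_eq_cube)
  qed (simp add: q_def b)
  have E: "0 \<le> E" "E \<le> \<eta> * C1 * q"
  proof -
    have "E = C1 * r\<^sup>2 * (r * K ^ 3)" by (simp add: E_def power2_eq_square power3_eq_cube)
    also have "\<dots> \<le> C1 * r\<^sup>2 * (\<eta> * b)" using rK \<open>0 \<le> C1\<close> by (intro mult_left_mono) auto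
    finally show "E \<le> \<eta> * C1 * q" by (simp add: q_def mult_ac)
  qed (use r K \<open>0 \<le> C1\<close> in \<open>simp add: E_def\<close>)
  have S: "r\<^sup>2 * b / 2 + E \<le> q"
    using E(2) mult_right_mono[OF \<eta>(3) q(1)] by (simp add: q_def)
  then show "r\<^sup>2 * b / 2 + E \<le> 1 / 2" using q \<eta>(4) by linarith
  have "2 * (r\<^sup>2 * b / 2 + E)\<^sup>2 + E \<le> 2 * q\<^sup>2 + \<eta> * C1 * q"
    using S E b by (intro add_mono mult_left_mono power_mono) auto
  also have "\<dots> = q * (2 * q + \<eta> * C1)" by (simp add: power2_eq_square algebra_simps)
  also have "\<dots> \<le> q * \<epsilon>" using q \<eta>(5) by (intro mult_left_mono) auto
  finally show "2 * (r\<^sup>2 * b / 2 + E)\<^sup>2 + E \<le> \<epsilon> * r\<^sup>2 * b" by (simp add: q_def mult_ac)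
qed

text \<open>The constants \<open>4 e\<^sup>2\<close> and \<open>48 e\<^sup>2\<close> are those of \<open>variance_le_of_bounded_gap\<close> and
  \<open>centered_ratio_taylor\<close>.\<close>
definition expansion_factor :: "real \<Rightarrow> real" where
  "expansion_factor \<epsilon> = min \<epsilon> 1 / (2 * (48 * exp 2) + 4 * (4 * exp 2) ^ 3 + 2 * (4 * exp 2) + 1)"

context entire_sq_series
begin

lemma centered_ratio_holomorphic: "centered_ratio t holomorphic_on S"
proof -
  have "H_fun a holomorphic_on UNIV"
    unfolding H_fun_eq holomorphic_on_def
    using moment_complex_has_field_derivative field_differentiable_at_within field_differentiable_def
    by blast
  then have "(\<lambda>\<tau>. H_fun a (complex_of_real t + \<tau>)) holomorphic_on S"
    by (rule holomorphic_on_compose_gen[unfolded o_def, rotated]) (auto intro: holomorphic_intros)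
  moreover have "H_fun a (complex_of_real t) * exp (\<tau> * complex_of_real (mean t)) \<noteq> 0" for \<tau>
    using moment_0_pos[of t] by (simp add: H_fun_of_real)
  ultimately show ?thesis
    unfolding centered_ratio_def[abs_def] by (intro holomorphic_intros) auto
qed

lemma local_log_expansion_of_bounded_gap:
  assumes "0 < \<epsilon>" "0 < K" "bounded_gap t (1 / K)"
  shows "local_log_expansion (H_fun a) (A_fun a (of_real t)) (B_fun a (of_real t)) t
           (expansion_factor \<epsilon> * (Re (B_fun a (of_real t)) / K ^ 3)) \<epsilon>"
proof -
  define C0 C1 :: real where "C0 = 4 * exp 2" and "C1 = 48 * exp 2"
  define \<eta> where "\<eta> = expansion_factor \<epsilon>"
  have \<eta>: "0 < \<eta>" "\<eta> * C0 \<le> 1 / 2" "\<eta> * C1 \<le> 1 / 2" "\<eta>\<^sup>2 * C0 ^ 3 \<le> 1 / 4"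
      "2 * \<eta>\<^sup>2 * C0 ^ 3 + \<eta> * C1 \<le> \<epsilon>"
    using expansion_factor_bounds[of C0 C1 \<epsilon>] assms(1)
    unfolding \<eta>_def expansion_factor_def C0_def C1_def by simp_all
  have b: "0 \<le> variance t" "variance t \<le> C0 * K\<^sup>2"
    using variance_nonneg variance_le_of_bounded_gap[OF assms(3)] assms(2)
    by (auto simp: C0_def field_simps)
  note estimates = cubic_error_estimates[of K "variance t" C0 _ \<eta> C1 \<epsilon>,
      OF assms(2) b _ _ less_imp_le[OF \<eta>(1)] \<eta>(2-5)]
  show ?thesis
    unfolding A_fun_of_real B_fun_of_real Re_complex_of_real \<eta>_def[symmetric]
  proof (rule local_log_expansion_of_quadratic_approx
      [where F = "centered_ratio t" and E = "\<lambda>r. C1 * r ^ 3 * K ^ 3"])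
    show "norm (centered_ratio t \<tau> - 1 - \<tau>\<^sup>2 * complex_of_real (variance t) / 2) \<le> C1 * norm \<tau> ^ 3 * K ^ 3"
      if "norm \<tau> \<le> \<eta> * (variance t / K ^ 3)" for \<tau>
    proof -
      have "norm \<tau> \<le> (1 / K) / 2" using estimates(1)[OF norm_ge_zero that] by (simp add: C1_def)
      from centered_ratio_taylor[OF assms(3) this] show ?thesis
        using assms(2) by (simp add: C1_def power_divide)
    qed
  qed (use estimates moment_0_pos[of t] b in \<open>auto simp: centered_ratio_def centered_ratio_holomorphic
        H_fun_of_real C1_def\<close>)
qed


section \<open>The central index\<close>

lemma max_term_central_index:
  assumes "0 < r"
  shows "(a (central_index a r))\<^sup>2 * r ^ central_index a r = max_term a r"
    and "(a n)\<^sup>2 * r ^ n \<le> max_term a r"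
proof -
  define f where "f n = (a n)\<^sup>2 * r ^ n" for n
  obtain m where "a m \<noteq> 0" using infinite_support not_finite_existsD by auto
  then have fm: "0 < f m" unfolding f_def using assms by simp
  have "f \<longlonglongrightarrow> 0" unfolding f_def by (rule summable_LIMSEQ_zero[OF summable_real_power_series])
  then obtain M where M: "\<And>n. M \<le> n \<Longrightarrow> f n < f m"
    using fm by (metis (no_types, lifting) eventually_sequentially order_tendstoD(2))
  define \<mu> where "\<mu> = Max (f ` {..M})"
  have "m \<le> M" using M[of m] by (metis less_irrefl nat_le_linear)
  then have f_le: "f n \<le> \<mu>" for n
    unfolding \<mu>_def using M[of n] by (cases "n \<le> M") (auto intro: Max_ge less_le_trans[THEN less_imp_le])
  have "\<mu> \<in> f ` {..M}" unfolding \<mu>_def by (intro Max_in) auto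
  then have \<mu>: "max_term a r = \<mu>"
    unfolding max_term_def f_def[symmetric] using f_le by (intro cSup_eq_maximum) auto
  have "{n. f n = \<mu>} \<subseteq> {..M}"
  proof
    fix n assume "n \<in> {n. f n = \<mu>}"
    then show "n \<in> {..M}" using M[of n] f_le[of m] by (cases "M \<le> n") auto
  qed
  then have "central_index a r \<in> {n. f n = \<mu>}"
    unfolding central_index_def f_def[symmetric] \<mu>
    using \<open>\<mu> \<in> f ` {..M}\<close> by (intro Max_in) (auto intro: finite_subset)
  then show "(a (central_index a r))\<^sup>2 * r ^ central_index a r = max_term a r"
    using \<mu> by (simp add: f_def)
  show "(a n)\<^sup>2 * r ^ n \<le> max_term a r" using f_le \<mu> by (simp add: f_def)
qed

lemma max_term_pos: "0 < max_term a (exp s)"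
proof -
  obtain m where "a m \<noteq> 0" using infinite_support not_finite_existsD by auto
  then show ?thesis
    using max_term_central_index(2)[of "exp s" m] by (smt (verit) exp_gt_zero weight_def weight_pos_iff)
qed

lemma lnH_le_ln_max_term:
  assumes "0 < h"
  shows "lnH (s - h) \<le> ln (max_term a (exp s)) - ln (1 - exp (- h))"
proof -
  let ?\<mu> = "max_term a (exp s)"
  have q: "norm (exp (- h)) < 1" "0 < 1 - exp (- h)" using assms by auto
  have "weight (s - h) n = weight s n * exp (- h) ^ n" for n
    using weight_shift[of s "- h" n] by (simp add: mult.commute flip: exp_of_nat_mult)
  then have "(\<lambda>n. weight s n * exp (- h) ^ n) sums moment 0 (s - h)"
    using weight_sums[of "s - h"] by simp
  moreover have "weight s n * exp (- h) ^ n \<le> ?\<mu> * exp (- h) ^ n" for n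
    using max_term_central_index(2)[of "exp s" n] by (intro mult_right_mono) (auto simp: weight_def)
  ultimately have "moment 0 (s - h) \<le> ?\<mu> * (1 / (1 - exp (- h)))"
    by (intro sums_le[OF _ _ sums_mult[OF geometric_sums[OF q(1)]]])
  then have "lnH (s - h) \<le> ln (?\<mu> / (1 - exp (- h)))"
    unfolding lnH_def using moment_0_pos[of "s - h"] max_term_pos[of s] q(2) by simp
  then show ?thesis using max_term_pos[of s] q(2) by (simp add: ln_div)
qed

lemma lnH_ge_ln_max_term:
  "ln (max_term a (exp s)) - real (central_index a (exp s)) * w \<le> lnH (s - w)"
proof -
  let ?N = "central_index a (exp s)"
  have "weight s ?N = max_term a (exp s)"
    using max_term_central_index(1)[of "exp s"] by (simp add: weight_def)
  then have "weight (s - w) ?N = max_term a (exp s) * exp (- (real ?N * w))"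
    using weight_shift[of s "- w" ?N] by (simp add: mult.commute)
  then have "max_term a (exp s) * exp (- (real ?N * w)) \<le> moment 0 (s - w)"
    using weight_le_moment_0 by metis
  then have "ln (max_term a (exp s) * exp (- (real ?N * w))) \<le> lnH (s - w)"
    unfolding lnH_def using max_term_pos[of s] moment_0_pos[of "s - w"] by simp
  then show ?thesis using max_term_pos[of s] by (simp add: ln_mult)
qed

lemma central_index_ge:
  assumes "0 < w" "w \<le> 2"
  shows "mean (s - w) / 2 - ln (4 / w) / w \<le> real (central_index a (exp s))"
proof -
  define h where "h = w / 2"
  have h: "0 < h" "h \<le> 1" using assms by (auto simp: h_def)
  have "ln (h / 2) \<le> ln (1 - exp (- h))"
    using exp_minus_le_one_minus_half[OF h] h by simp
  moreover have "ln (h / 2) = - ln (4 / w)" using assms by (simp add: h_def ln_div)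
  moreover have "(s - h - (s - w)) * mean (s - w) \<le> lnH (s - h) - lnH (s - w)"
    using assms by (intro lnH_diff_ge) (simp add: h_def)
  ultimately have "(w / 2) * mean (s - w) \<le> real (central_index a (exp s)) * w + ln (4 / w)"
    using lnH_le_ln_max_term[OF h(1), of s] lnH_ge_ln_max_term[of s w] by (simp add: h_def)
  then show ?thesis using assms by (simp add: field_simps)
qed

end

section \<open>The exceptional set\<close>

text \<open>The last two conditions turn the bound of \<open>central_index_ge_off_exceptional\<close> into
  \<open>N \<ge> A / 8\<close> and then \<open>N powr ((1 + 2 \<theta>) / 2) \<ge> A powr ((1 + \<theta>) / 2)\<close>.\<close>
definition large_for :: "real \<Rightarrow> real \<Rightarrow> bool" where
  "large_for \<theta> A \<longleftrightarrow> 4 \<le> A \<and>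
     A / 8 \<le> A / 2 - A powr ((1 + \<theta>) / 2) - A powr ((1 + \<theta>) / 2) * ln (4 * A powr ((1 + \<theta>) / 2)) \<and>
     A powr ((1 + \<theta>) / 2) \<le> (A / 8) powr ((1 + 2 * \<theta>) / 2)"

lemma eventually_large_for:
  assumes "0 < \<theta>" "\<theta> < 1"
  shows "eventually (large_for \<theta>) at_top"
proof -
  have "eventually (\<lambda>A::real. 4 \<le> A) at_top" by real_asymp
  moreover have "eventually (\<lambda>A. A / 8 \<le> A / 2 - A powr ((1 + \<theta>) / 2)
      - A powr ((1 + \<theta>) / 2) * ln (4 * A powr ((1 + \<theta>) / 2))) at_top"
    using assms by real_asymp
  moreover have "eventually (\<lambda>A. A powr ((1 + \<theta>) / 2) \<le> (A / 8) powr ((1 + 2 * \<theta>) / 2)) at_top"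
    using assms by real_asymp
  ultimately show ?thesis unfolding large_for_def by eventually_elim blast
qed

locale exceptional_set = entire_sq_series +
  fixes \<theta> s1 :: real
  assumes \<theta>: "0 < \<theta>" "\<theta> < 1"
    and large_mean: "\<And>s. s1 - 1 \<le> s \<Longrightarrow> large_for \<theta> (mean s)"
begin

lemma mean_ge_4: "s1 - 1 \<le> s \<Longrightarrow> 4 \<le> mean s"
  using large_mean by (simp add: large_for_def)

definition window :: "real \<Rightarrow> real" where
  "window s = mean s powr (- ((1 + \<theta>) / 2))"

definition exceptional :: "real set" where
  "exceptional = {s. s1 \<le> s \<and> 2 * mean s powr ((1 + \<theta>) / 2) \<le> mean (s + window s) - mean (s - window s)}"

lemma window_pos: "s1 - 1 \<le> s \<Longrightarrow> 0 < window s"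
  using mean_ge_4[of s] by (simp add: window_def)

lemma window_le_half:
  assumes "s1 - 1 \<le> s"
  shows "window s \<le> 1 / 2"
proof -
  have "window s \<le> 4 powr (- ((1 + \<theta>) / 2))"
    unfolding window_def by (rule powr_mono2') (use mean_ge_4[OF assms] \<theta> in auto)
  also have "\<dots> \<le> 4 powr (- (1 / 2))" by (rule powr_mono) (use \<theta> in auto)
  also have "\<dots> = 1 / 2" by (simp add: powr_minus powr_half_sqrt real_sqrt_eq_iff power2_eq_square)
  finally show ?thesis .
qed

lemma window_antimono: "s1 - 1 \<le> x \<Longrightarrow> x \<le> y \<Longrightarrow> window y \<le> window x"
  unfolding window_def using mean_ge_4[of x] mean_mono[of x y] \<theta> by (intro powr_mono2') auto

lemma window_mult_powr: "s1 - 1 \<le> s \<Longrightarrow> window s * mean s powr ((1 + \<theta>) / 2) = 1"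
  using mean_ge_4[of s] by (simp add: window_def flip: powr_add)

lemma exceptional_ge: "s \<in> exceptional \<Longrightarrow> s1 \<le> s"
  by (simp add: exceptional_def)

lemma closed_exceptional: "closed exceptional"
proof -
  have mean_pos: "\<forall>s\<in>{s1..}. mean s \<noteq> 0"
  proof
    fix s assume "s \<in> {s1..}"
    then show "mean s \<noteq> 0" using mean_ge_4[of s] by simp
  qed
  have "continuous_on {s1..} window"
    unfolding window_def using mean_pos by (intro continuous_intros continuous_on_mean) auto
  then have "continuous_on {s1..} (\<lambda>s. mean (s + window s) - mean (s - window s) - 2 * mean s powr ((1 + \<theta>) / 2))"
    using mean_pos
    by (intro continuous_intros continuous_on_compose2[OF continuous_on_mean[of UNIV]] continuous_on_mean)
      auto
  from continuous_closed_preimage[OF this closed_atLeast closed_atLeast[of 0]]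
  show ?thesis by (simp add: exceptional_def vimage_def Int_def le_diff_eq)
qed

lemma window_le_potential_drop:
  assumes r: "r \<in> exceptional"
  shows "window r \<le> 4 / \<theta> * (mean (r - window r) powr (- \<theta>) - mean (r + window r) powr (- \<theta>))"
proof -
  define A b c u where "A = mean r" and "b = mean (r + window r)" and "c = mean (r - window r)"
    and "u = window r"
  define x where "x = A powr ((1 + \<theta>) / 2 - 1)"
  have u: "0 < u" "u \<le> 1 / 2" using window_pos window_le_half exceptional_ge[OF r] by (auto simp: u_def)
  have A: "4 \<le> A" "4 \<le> c" using mean_ge_4 exceptional_ge[OF r] u by (auto simp: A_def c_def u_def)
  have cA: "c \<le> A" and Ab: "A \<le> b" using u by (auto simp: A_def b_def c_def u_def intro: mean_mono)
  have "x \<le> A powr 0" unfolding x_def using A \<theta> by (intro powr_mono) auto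
  then have x: "0 < x" "x \<le> 1" using A by (auto simp: x_def)
  have "A * x = A powr (1 + ((1 + \<theta>) / 2 - 1))" using A by (simp add: x_def powr_add)
  also have "1 + ((1 + \<theta>) / 2 - 1) = (1 + \<theta>) / 2" by linarith
  finally have Ax: "A * x = A powr ((1 + \<theta>) / 2)" .
  have "x * A powr (- \<theta>) = A powr ((1 + \<theta>) / 2 - 1 + - \<theta>)"
    unfolding x_def by (rule powr_add[symmetric])
  also have "(1 + \<theta>) / 2 - 1 + - \<theta> = - ((1 + \<theta>) / 2)" by (simp add: field_simps)
  finally have xA: "x * A powr (- \<theta>) = u" by (simp add: u_def A_def window_def)
  have "2 * (A * x) \<le> b - c" using r Ax by (simp add: exceptional_def A_def b_def c_def)
  \<comment> \<open>A rise of \<open>2 A x\<close> across the window is a rise of \<open>A x\<close> to the right or a drop of \<open>A x\<close> to the left.\<close>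
  then consider "A * (1 + x) \<le> b" | "c \<le> A * (1 - x)" by (smt (verit) distrib_left)
  then have "\<theta> / 4 * x * A powr (- \<theta>) \<le> c powr (- \<theta>) - b powr (- \<theta>)"
  proof cases
    case 1
    have "c powr (- \<theta>) \<ge> A powr (- \<theta>)" using A cA \<theta> by (intro powr_mono2') auto
    then show ?thesis using powr_neg_decrement_ge[OF \<theta> _ x 1] A by linarith
  next
    case 2
    have "b powr (- \<theta>) \<le> A powr (- \<theta>)" using A Ab \<theta> by (intro powr_mono2') auto
    moreover have "\<theta> / 4 * x * A powr (- \<theta>) \<le> \<theta> * x * A powr (- \<theta>)" using \<theta> x by simp
    ultimately show ?thesis using powr_neg_increment_ge[of \<theta> A c x] \<theta> A x 2 by linarith
  qed
  then show ?thesis using \<theta> xA by (simp add: b_def c_def u_def field_simps)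
qed


lemma finite_log_measure_exceptional: "finite_log_measure {t. 0 < t \<and> ln t \<in> exceptional}"
proof -
  interpret greedy_interval_cover exceptional window s1
    using closed_exceptional exceptional_ge window_pos window_antimono by unfold_locales force+
  show ?thesis
  proof (rule finite_log_measure_greedy_cover
      [where \<Phi> = "\<lambda>s. mean s powr (- \<theta>)" and C = "4 / \<theta>" and c = "s1 - 1" and M = 1])
    show "antimono_on {s1 - 1..} (\<lambda>s. mean s powr (- \<theta>))"
      using mean_ge_4 mean_mono \<theta> by (force simp: monotone_on_def intro!: powr_mono2')
    show "mean x powr (- \<theta>) \<le> 1" if "s1 - 1 \<le> x" for x
      using powr_mono2'[of "- \<theta>" 1 "mean x"] mean_ge_4[OF that] \<theta> by simp
    show "window x \<le> 1 / 2" if "x \<in> exceptional" for x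
      using window_le_half exceptional_ge[OF that] by simp
    show "exceptional \<subseteq> {s1 - 1 + 1 / 2..}" using exceptional_ge by force
  qed (use window_le_potential_drop \<theta> in auto)
qed

lemma bounded_gap_off_exceptional:
  assumes t: "s1 \<le> t" "t \<notin> exceptional" and K: "mean t powr ((1 + \<theta>) / 2) \<le> K"
  shows "bounded_gap t (1 / K)"
proof -
  define u P where "u = window t" and "P = mean t powr ((1 + \<theta>) / 2)"
  have P: "0 < P" using mean_ge_4[of t] t by (simp add: P_def)
  have u: "u = 1 / P" using window_mult_powr[of t] t P by (simp add: u_def P_def field_simps)
  define v where "v = 1 / K"
  have "P \<le> K" using K by (simp add: P_def)
  then have v: "0 < v" "v \<le> u" using P by (auto simp: u v_def intro: divide_left_mono)
  have jump: "u * (mean (t + u) - mean (t - u)) \<le> 2"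
  proof -
    have "mean (t + u) - mean (t - u) \<le> 2 * P" using t by (auto simp: exceptional_def u_def P_def)
    then show ?thesis using P by (simp add: u field_simps)
  qed
  have right: "gap t v \<le> u * (mean (t + u) - mean (t - u))"
  proof -
    have "gap t v \<le> v * (mean (t + v) - mean t)" using v by (intro gap_le) simp
    also have "\<dots> \<le> u * (mean (t + u) - mean (t - u))"
      using v mean_mono[of "t + v" "t + u"] mean_mono[of "t - u" t] mean_mono[of t "t + v"]
      by (intro mult_mono) auto
    finally show ?thesis .
  qed
  have left: "gap t (- v) \<le> u * (mean (t + u) - mean (t - u))"
  proof -
    have "gap t (- v) \<le> v * (mean t - mean (t - v))" using v by (intro gap_minus_le) simp
    also have "\<dots> \<le> u * (mean (t + u) - mean (t - u))"
      using v mean_mono[of t "t + u"] mean_mono[of "t - u" "t - v"] mean_mono[of "t - v" t]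
      by (intro mult_mono) auto
    finally show ?thesis .
  qed
  show ?thesis using jump right left v unfolding bounded_gap_def v_def by linarith
qed

lemma central_index_ge_off_exceptional:
  assumes t: "s1 \<le> t" "t \<notin> exceptional"
  defines "P \<equiv> mean t powr ((1 + \<theta>) / 2)"
  shows "mean t / 2 - P - P * ln (4 * P) \<le> real (central_index a (exp t))"
proof -
  define u where "u = window t"
  have P: "0 < P" using mean_ge_4[of t] t by (simp add: P_def)
  have u: "u = 1 / P" using window_mult_powr[of t] t P by (simp add: u_def P_def field_simps)
  have "0 < u" "u \<le> 2" using window_pos[of t] window_le_half[of t] t by (auto simp: u_def)
  then have "mean (t - u) / 2 - ln (4 / u) / u \<le> real (central_index a (exp t))"
    by (rule central_index_ge)
  moreover have "mean t \<le> mean (t + u)" using \<open>0 < u\<close> by (intro mean_mono) simp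
  then have "mean t - 2 * P \<le> mean (t - u)" using t by (auto simp: exceptional_def u_def P_def)
  moreover have "ln (4 / u) / u = P * ln (4 * P)" using P by (simp add: u)
  ultimately show ?thesis by simp
qed


lemma K_fun_ge_off_exceptional:
  assumes t: "s1 \<le> t" "t \<notin> exceptional"
  shows "mean t powr ((1 + \<theta>) / 2) \<le> K_fun a (2 * \<theta>) (exp t)"
proof -
  have large: "large_for \<theta> (mean t)" using large_mean t by simp
  then have "mean t / 8 \<le> real (central_index a (exp t))"
    using central_index_ge_off_exceptional[OF t] unfolding large_for_def by linarith
  then have "(mean t / 8) powr ((1 + 2 * \<theta>) / 2) \<le> K_fun a (2 * \<theta>) (exp t)"
    unfolding K_fun_def using mean_ge_4[of t] t \<theta> by (intro powr_mono2) auto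
  then show ?thesis using large unfolding large_for_def by linarith
qed

lemma local_delta_admissible_off_exceptional:
  assumes K: "\<And>t. s1 \<le> t \<Longrightarrow> t \<notin> exceptional \<Longrightarrow> mean t powr ((1 + \<theta>) / 2) \<le> K t"
  shows "local_delta_admissible (H_fun a) (A_fun a) (B_fun a)
           (\<lambda>t. Re (B_fun a (of_real t)) / K t ^ 3) (- exceptional)"
  unfolding local_delta_admissible_iff
proof (intro allI impI)
  fix \<epsilon> :: real
  assume \<epsilon>: "0 < \<epsilon>"
  have "0 < expansion_factor \<epsilon>"
    using expansion_factor_bounds(1)[of "4 * exp 2" "48 * exp 2" \<epsilon>] \<epsilon> by (simp add: expansion_factor_def)
  moreover have "local_log_expansion (H_fun a) (A_fun a (of_real t)) (B_fun a (of_real t)) t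
      (expansion_factor \<epsilon> * (Re (B_fun a (of_real t)) / K t ^ 3)) \<epsilon>"
    if t: "t \<in> - exceptional" "s1 < t" for t
  proof -
    have "0 < mean t powr ((1 + \<theta>) / 2)" using mean_ge_4[of t] t by simp
    moreover have "mean t powr ((1 + \<theta>) / 2) \<le> K t" using K[of t] t by simp
    ultimately have "0 < K t" by linarith
    with \<epsilon> show ?thesis
      using local_log_expansion_of_bounded_gap bounded_gap_off_exceptional K t by simp
  qed
  ultimately show "\<exists>\<eta>>0. \<exists>t0. \<forall>t\<in>- exceptional. t0 < t \<longrightarrow> local_log_expansion (H_fun a)
      (A_fun a (of_real t)) (B_fun a (of_real t)) t (\<eta> * (Re (B_fun a (of_real t)) / K t ^ 3)) \<epsilon>"
    by blast
qed

definition admissible_radii :: "real set" where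
  "admissible_radii = {r. 0 < r \<and> ln r \<notin> exceptional}"

lemma admissible_radii_subset: "admissible_radii \<subseteq> {0<..}"
  by (auto simp: admissible_radii_def)

lemma admissible_radii_measurable: "admissible_radii \<in> sets lborel"
proof -
  have "continuous_on {0<..} (ln :: real \<Rightarrow> real)" by (intro continuous_intros) auto
  then have "open (ln -` (- exceptional) \<inter> {0<..})"
    using closed_exceptional unfolding continuous_on_open_vimage[OF open_greaterThan]
    by (auto simp: open_Compl)
  moreover have "ln -` (- exceptional) \<inter> {0<..} = admissible_radii"
    by (auto simp: admissible_radii_def)
  ultimately show ?thesis by (metis borel_open sets_lborel)
qed

lemma finite_log_measure_not_admissible: "finite_log_measure ({0<..} - admissible_radii)"
proof -
  have "{0<..} - admissible_radii = {t. 0 < t \<and> ln t \<in> exceptional}"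
    by (auto simp: admissible_radii_def)
  then show ?thesis using finite_log_measure_exceptional by simp
qed

lemma exp_in_admissible_radii_iff: "exp t \<in> admissible_radii \<longleftrightarrow> t \<notin> exceptional"
  by (simp add: admissible_radii_def)

end

theorem proposition3p13:
  fixes a :: "nat \<Rightarrow> real" and \<gamma> :: real
  assumes nonneg: "\<And>n. a n \<ge> 0"
    and entire: "\<And>z::complex. summable (\<lambda>n. complex_of_real ((a n)\<^sup>2) * z ^ n)"
    and transcendental: "infinite {n. a n \<noteq> 0}"
    and gamma: "0 < \<gamma>" "\<gamma> < 1/2"
  shows "\<exists>\<N>. \<N> \<subseteq> {0<..} \<and> \<N> \<in> sets lborel \<and>
           finite_log_measure ({0<..} - \<N>) \<and>
           local_delta_admissible (H_fun a) (A_fun a) (B_fun a)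
             (\<lambda>t. Re (B_fun a (of_real t)) / (K_fun a \<gamma> (exp t)) ^ 3)
             {t. exp t \<in> \<N>}"
proof -
  interpret entire_sq_series a using entire transcendental by unfold_locales
  define \<theta> where "\<theta> = \<gamma> / 2"
  have "eventually (\<lambda>s. large_for \<theta> (mean s)) at_top"
    using filterlim_mean_at_top eventually_large_for[of \<theta>] gamma
    unfolding filterlim_iff \<theta>_def by simp
  then obtain s0 where "\<And>s. s0 \<le> s \<Longrightarrow> large_for \<theta> (mean s)"
    unfolding eventually_at_top_linorder by blast
  then interpret exceptional_set a \<theta> "s0 + 1"
    using gamma by unfold_locales (auto simp: \<theta>_def)
  have "local_delta_admissible (H_fun a) (A_fun a) (B_fun a)
      (\<lambda>t. Re (B_fun a (of_real t)) / (K_fun a \<gamma> (exp t)) ^ 3) (- exceptional)"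
    using local_delta_admissible_off_exceptional K_fun_ge_off_exceptional by (simp add: \<theta>_def)
  moreover have "{t. exp t \<in> admissible_radii} = - exceptional"
    by (auto simp: exp_in_admissible_radii_iff)
  ultimately show ?thesis
    using admissible_radii_subset admissible_radii_measurable finite_log_measure_not_admissible
    by (intro exI[of _ admissible_radii]) simp
qed

end
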